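(* There exist finite connected simple graphs $H_1$ and $H_2$ having a common universal cover (equivalently, a common finite connected covering graph) such that their minimal common cover is not unique. That is, there exist at least two pairwise non-isomorphic connected graphs, each of which is a covering graph of both $H_1$ and $H_2$, and each of which has the minimum number of vertices among all connected common covering graphs of $H_1$ and $H_2$.
   Context: A graph $\tilde G$ is a covering graph of a graph $G$ if there is a surjective graph homomorphism $f\colon\tilde G\to G$ such that, for every vertex $v$ of $\tilde G$, $f$ maps the set of edges incident with $v$ bijectively onto the set of edges incident with $f(v)$. A common cover of $H_1$ and $H_2$ is a graph that is a covering graph of both. The universal cover of a connected graph is its (possibly infinite) universal covering tree. *)

theory Defs
  imports Main
begin

definition simple_graph :: "'a set \<Rightarrow> ('a \<Rightarrow> 'a \<Rightarrow> bool) \<Rightarrow> bool" where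
  "simple_graph V E \<longleftrightarrow>
     (\<forall>x y. E x y \<longrightarrow> x \<in> V \<and> y \<in> V) \<and>
     (\<forall>x y. E x y \<longrightarrow> E y x) \<and> (\<forall>x. \<not> E x x)"

definition finite_simple_graph :: "'a set \<Rightarrow> ('a \<Rightarrow> 'a \<Rightarrow> bool) \<Rightarrow> bool" where
  "finite_simple_graph V E \<longleftrightarrow> finite V \<and> simple_graph V E"

definition connected_graph :: "'a set \<Rightarrow> ('a \<Rightarrow> 'a \<Rightarrow> bool) \<Rightarrow> bool" where
  "connected_graph V E \<longleftrightarrow> V \<noteq> {} \<and> (\<forall>x\<in>V. \<forall>y\<in>V. E\<^sup>*\<^sup>* x y)"

text \<open>In a simple
graph the edges incident with v correspond to the neighbours of v.\<close>

definition covering_map ::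
  "'a set \<Rightarrow> ('a \<Rightarrow> 'a \<Rightarrow> bool) \<Rightarrow> 'b set \<Rightarrow> ('b \<Rightarrow> 'b \<Rightarrow> bool) \<Rightarrow> ('a \<Rightarrow> 'b) \<Rightarrow> bool" where
  "covering_map VC EC V E f \<longleftrightarrow>
     f ` VC = V \<and>
     (\<forall>x y. EC x y \<longrightarrow> E (f x) (f y)) \<and>
     (\<forall>v\<in>VC. bij_betw f {w. EC v w} {u. E (f v) u})"

definition covering_graph ::
  "'a set \<Rightarrow> ('a \<Rightarrow> 'a \<Rightarrow> bool) \<Rightarrow> 'b set \<Rightarrow> ('b \<Rightarrow> 'b \<Rightarrow> bool) \<Rightarrow> bool" where
  "covering_graph VC EC V E \<longleftrightarrow> (\<exists>f. covering_map VC EC V E f)"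

definition graph_iso ::
  "'a set \<Rightarrow> ('a \<Rightarrow> 'a \<Rightarrow> bool) \<Rightarrow> 'b set \<Rightarrow> ('b \<Rightarrow> 'b \<Rightarrow> bool) \<Rightarrow> bool" where
  "graph_iso V E V' E' \<longleftrightarrow>
     (\<exists>f. bij_betw f V V' \<and> (\<forall>x\<in>V. \<forall>y\<in>V. E x y \<longleftrightarrow> E' (f x) (f y)))"

definition common_cover ::
  "'a set \<Rightarrow> ('a \<Rightarrow> 'a \<Rightarrow> bool) \<Rightarrow> 'b set \<Rightarrow> ('b \<Rightarrow> 'b \<Rightarrow> bool) \<Rightarrow> 'b set \<Rightarrow> ('b \<Rightarrow> 'b \<Rightarrow> bool) \<Rightarrow> bool" where
  "common_cover VC EC V1 E1 V2 E2 \<longleftrightarrow>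
     finite_simple_graph VC EC \<and> connected_graph VC EC \<and>
     covering_graph VC EC V1 E1 \<and> covering_graph VC EC V2 E2"

end

theory Submission imports Defs begin

text \<open>Let \<open>H\<^sub>1\<close> and \<open>H\<^sub>2\<close> be the connected graphs with 6 and 9 vertices below.
In a covering of a connected simple graph all fibres have the same size, so the
order of every finite connected common cover is divisible by \<open>lcm 6 9 = 18\<close>.
We exhibit two common covers \<open>G\<^sub>A\<close> and \<open>G\<^sub>B\<close> with 18 vertices; both are minimal,
and they are not isomorphic because \<open>G\<^sub>A\<close> contains a triangle while \<open>G\<^sub>B\<close> does not.\<close>

lemma covering_map_fibre_card_le:
  assumes sg: "simple_graph VC EC" and cm: "covering_map VC EC V E f" and fin: "finite VC"
    and uw: "E u w"
  shows "card {x\<in>VC. f x = u} \<le> card {x\<in>VC. f x = w}"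
proof -
  let ?lift = "\<lambda>x. SOME y. EC x y \<and> f y = w"
  have lift_exists: "\<exists>y. EC x y \<and> f y = w" if "x \<in> VC" "f x = u" for x
  proof -
    from cm that have "f ` {y. EC x y} = {t. E u t}"
      unfolding covering_map_def bij_betw_def by auto
    with uw show ?thesis by (metis (mono_tags, lifting) imageE mem_Collect_eq)
  qed
  have lift: "EC x (?lift x) \<and> f (?lift x) = w" if "x \<in> VC" "f x = u" for x
    using someI_ex[OF lift_exists[OF that]] .
  txt \<open>Two points of the fibre over \<open>u\<close> with a common lift would be two neighbours of
    that lift with the same image, contradicting local injectivity at the lift.\<close>
  have "inj_on ?lift {x\<in>VC. f x = u}"
  proof (rule inj_onI)
    fix x x' assume x: "x \<in> {x\<in>VC. f x = u}" and x': "x' \<in> {x\<in>VC. f x = u}"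
      and eq: "?lift x = ?lift x'"
    let ?y = "?lift x"
    have "EC ?y x" "EC ?y x'" "?y \<in> VC"
      using lift[of x] lift[of x'] x x' eq sg unfolding simple_graph_def by auto
    moreover from cm \<open>?y \<in> VC\<close> have "inj_on f {t. EC ?y t}"
      unfolding covering_map_def bij_betw_def by blast
    ultimately show "x = x'" using x x' by (auto dest: inj_onD)
  qed
  moreover have "?lift ` {x\<in>VC. f x = u} \<subseteq> {x\<in>VC. f x = w}"
    using lift sg unfolding simple_graph_def by blast
  ultimately show ?thesis by (rule card_inj_on_le) (use fin in auto)
qed

lemma covering_map_card_dvd:
  assumes sgC: "simple_graph VC EC" and sg: "simple_graph V E"
    and cm: "covering_map VC EC V E f" and fin: "finite VC" and conn: "connected_graph V E"
  shows "card V dvd card VC"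
proof -
  have symE: "E b a" if "E a b" for a b
    using sg that unfolding simple_graph_def by blast
  have fibre_edge: "card {x\<in>VC. f x = u} = card {x\<in>VC. f x = w}" if "E u w" for u w
    using covering_map_fibre_card_le[OF sgC cm fin that]
      covering_map_fibre_card_le[OF sgC cm fin symE[OF that]] by simp
  have fibre_eq: "card {x\<in>VC. f x = u} = card {x\<in>VC. f x = w}" if "E\<^sup>*\<^sup>* u w" for u w
    using that by (induction rule: rtranclp_induct) (auto simp: fibre_edge)
  from conn obtain u0 where u0: "u0 \<in> V" unfolding connected_graph_def by blast
  have image: "f ` VC = V" using cm unfolding covering_map_def by blast
  then have "finite V" using fin by blast
  have "VC = (\<Union>u\<in>V. {x\<in>VC. f x = u})" using image by blast
  then have "card VC = card (\<Union>u\<in>V. {x\<in>VC. f x = u})" by simp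
  also have "\<dots> = (\<Sum>u\<in>V. card {x\<in>VC. f x = u})"
    by (rule card_UN_disjoint) (use \<open>finite V\<close> fin in auto)
  also have "\<dots> = (\<Sum>u\<in>V. card {x\<in>VC. f x = u0})"
    using fibre_eq conn u0 unfolding connected_graph_def by (intro sum.cong) auto
  also have "\<dots> = card V * card {x\<in>VC. f x = u0}" by simp
  finally show ?thesis by simp
qed

lemma common_cover_lcm_card_dvd:
  assumes "common_cover VC EC V1 E1 V2 E2"
    and "simple_graph V1 E1" "connected_graph V1 E1"
    and "simple_graph V2 E2" "connected_graph V2 E2"
  shows "lcm (card V1) (card V2) dvd card VC"
  using assms covering_map_card_dvd
  unfolding common_cover_def finite_simple_graph_def covering_graph_def
  by (metis lcm_least)

definition has_triangle :: "('a \<Rightarrow> 'a \<Rightarrow> bool) \<Rightarrow> bool" where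
  "has_triangle E \<longleftrightarrow> (\<exists>a b c. E a b \<and> E b c \<and> E c a)"

lemma graph_iso_has_triangle:
  assumes "graph_iso V E V' E'" "simple_graph V E" "has_triangle E"
  shows "has_triangle E'"
  using assms unfolding graph_iso_def simple_graph_def has_triangle_def by meson

definition edge_adj :: "('a \<times> 'a) list \<Rightarrow> 'a \<Rightarrow> 'a \<Rightarrow> bool" where
  "edge_adj L x y \<longleftrightarrow> (x, y) \<in> set L \<or> (y, x) \<in> set L"

definition neighbours :: "('a \<times> 'a) list \<Rightarrow> 'a \<Rightarrow> 'a list" where
  "neighbours L v = map snd (filter (\<lambda>p. fst p = v) L) @ map fst (filter (\<lambda>p. snd p = v) L)"

lemma set_neighbours: "set (neighbours L v) = {w. edge_adj L v w}"
  unfolding neighbours_def edge_adj_def by force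

lemma edge_adj_sym: "edge_adj L x y \<Longrightarrow> edge_adj L y x"
  by (auto simp: edge_adj_def)

definition simple_edges :: "nat \<Rightarrow> (nat \<times> nat) list \<Rightarrow> bool" where
  "simple_edges n L \<longleftrightarrow> list_all (\<lambda>(a, b). a < n \<and> b < n \<and> a \<noteq> b) L"

lemma simple_edges_finite_simple_graph:
  "simple_edges n L \<Longrightarrow> finite_simple_graph {0..<n} (edge_adj L)"
  unfolding simple_edges_def finite_simple_graph_def simple_graph_def list_all_iff edge_adj_def
  by fastforce

definition descending_edges :: "nat \<Rightarrow> (nat \<times> nat) list \<Rightarrow> bool" where
  "descending_edges n L \<longleftrightarrow>
     0 < n \<and> list_all (\<lambda>x. list_ex (\<lambda>y. y < x) (neighbours L x)) [1..<n]"

lemma descending_edges_reaches_0: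
  assumes "descending_edges n L" "x < n"
  shows "(edge_adj L)\<^sup>*\<^sup>* x 0"
  using assms(2)
proof (induction x rule: less_induct)
  case (less x)
  show ?case
  proof (cases "x = 0")
    case False
    with less.prems have "x \<in> set [1..<n]" by simp
    with assms(1) obtain y where "edge_adj L x y" "y < x"
      unfolding descending_edges_def list_all_iff list_ex_iff set_neighbours by blast
    with less show ?thesis by (meson converse_rtranclp_into_rtranclp order.strict_trans)
  qed simp
qed

lemma descending_edges_connected_graph:
  assumes "descending_edges n L"
  shows "connected_graph {0..<n} (edge_adj L)"
proof -
  have "symp (edge_adj L)\<^sup>*\<^sup>*"
    by (rule symp_rtranclp) (auto intro: sympI edge_adj_sym)
  then have "(edge_adj L)\<^sup>*\<^sup>* x y" if "x < n" "y < n" for x y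
    using descending_edges_reaches_0[OF assms that(1)] descending_edges_reaches_0[OF assms that(2)]
    by (meson rtranclp_trans sympD)
  moreover have "0 < n" using assms by (simp add: descending_edges_def)
  ultimately show ?thesis unfolding connected_graph_def by auto
qed

definition covering_list ::
  "nat \<Rightarrow> (nat \<times> nat) list \<Rightarrow> nat \<Rightarrow> (nat \<times> nat) list \<Rightarrow> nat list \<Rightarrow> bool" where
  "covering_list nc Lc n L fl \<longleftrightarrow> length fl = nc \<and> set fl = {0..<n} \<and>
     list_all (\<lambda>(a, b). edge_adj L (fl ! a) (fl ! b)) Lc \<and>
     list_all (\<lambda>v. distinct (map (nth fl) (neighbours Lc v)) \<and>
        set (map (nth fl) (neighbours Lc v)) = set (neighbours L (fl ! v))) [0..<nc]"

lemma covering_list_covering_map: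
  assumes "covering_list nc Lc n L fl"
  shows "covering_map {0..<nc} (edge_adj Lc) {0..<n} (edge_adj L) (nth fl)"
proof -
  from assms have len: "length fl = nc" and set_fl: "set fl = {0..<n}"
    and edges: "list_all (\<lambda>(a, b). edge_adj L (fl ! a) (fl ! b)) Lc"
    and local_bij: "list_all (\<lambda>v. distinct (map (nth fl) (neighbours Lc v)) \<and>
        set (map (nth fl) (neighbours Lc v)) = set (neighbours L (fl ! v))) [0..<nc]"
    unfolding covering_list_def by auto
  have "nth fl ` {0..<nc} = {0..<n}"
    using len set_fl by (auto simp flip: set_fl simp: set_conv_nth)
  moreover have "edge_adj L (fl ! x) (fl ! y)" if "edge_adj Lc x y" for x y
    using that edges edge_adj_sym unfolding edge_adj_def list_all_iff by fastforce
  moreover have "bij_betw (nth fl) {w. edge_adj Lc v w} {u. edge_adj L (fl ! v) u}"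
    if "v \<in> {0..<nc}" for v
    using local_bij that
    by (auto simp: list_all_iff bij_betw_def distinct_map simp flip: set_neighbours)
  ultimately show ?thesis unfolding covering_map_def by blast
qed

definition triangle_free_edges :: "('a \<times> 'a) list \<Rightarrow> bool" where
  "triangle_free_edges L \<longleftrightarrow>
     list_all (\<lambda>(a, b). list_all (\<lambda>w. w \<notin> set (neighbours L b)) (neighbours L a)) L"

lemma triangle_free_edges_not_has_triangle:
  assumes "triangle_free_edges L"
  shows "\<not> has_triangle (edge_adj L)"
proof
  assume "has_triangle (edge_adj L)"
  then obtain x y z where xy: "edge_adj L x y" and "edge_adj L y z" "edge_adj L z x"
    unfolding has_triangle_def by blast
  then have "z \<in> set (neighbours L x)" "z \<in> set (neighbours L y)"
    unfolding set_neighbours using edge_adj_sym by auto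
  with assms xy show False
    unfolding triangle_free_edges_def list_all_iff edge_adj_def by fast
qed

definition H1_edges :: "(nat \<times> nat) list" where
  "H1_edges = [(0, 1), (0, 2), (0, 3), (1, 2), (2, 4), (3, 4), (3, 5), (4, 5)]"

definition H2_edges :: "(nat \<times> nat) list" where
  "H2_edges = [(0, 1), (0, 2), (0, 3), (1, 2), (2, 4), (3, 5), (3, 6), (4, 7), (4, 8), (5, 6),
    (5, 8), (7, 8)]"

definition GA_edges :: "(nat \<times> nat) list" where
  "GA_edges = [(0, 1), (0, 2), (0, 3), (1, 2), (2, 4), (3, 5), (3, 6), (4, 7), (4, 8), (5, 6),
    (5, 9), (7, 8), (8, 10), (9, 11), (9, 12), (10, 13), (10, 14), (11, 12), (11, 15), (13, 14),
    (14, 16), (15, 16), (15, 17), (16, 17)]"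

definition GA_to_H1 :: "nat list" where
  "GA_to_H1 = [0, 1, 2, 3, 4, 4, 5, 5, 3, 2, 0, 0, 1, 1, 2, 3, 4, 5]"

definition GA_to_H2 :: "nat list" where
  "GA_to_H2 = [0, 1, 2, 3, 4, 5, 6, 7, 8, 8, 5, 4, 7, 6, 3, 2, 0, 1]"

definition GB_edges :: "(nat \<times> nat) list" where
  "GB_edges = [(0, 1), (0, 2), (0, 3), (1, 4), (2, 5), (2, 6), (3, 7), (3, 8), (4, 9), (4, 10),
    (5, 11), (5, 12), (6, 13), (7, 14), (7, 15), (8, 10), (9, 12), (9, 16), (10, 17), (11, 17),
    (12, 14), (13, 15), (13, 17), (15, 16)]"

definition GB_to_H1 :: "nat list" where
  "GB_to_H1 = [0, 1, 2, 3, 2, 4, 1, 4, 5, 0, 4, 5, 3, 0, 5, 2, 1, 3]"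

definition GB_to_H2 :: "nat list" where
  "GB_to_H2 = [0, 1, 3, 2, 2, 5, 6, 4, 1, 4, 0, 6, 8, 5, 7, 8, 7, 3]"

lemma example_checks:
  "simple_edges 6 H1_edges" "descending_edges 6 H1_edges"
  "simple_edges 9 H2_edges" "descending_edges 9 H2_edges"
  "simple_edges 18 GA_edges" "descending_edges 18 GA_edges"
  "simple_edges 18 GB_edges" "descending_edges 18 GB_edges"
  "covering_list 18 GA_edges 6 H1_edges GA_to_H1" "covering_list 18 GA_edges 9 H2_edges GA_to_H2"
  "covering_list 18 GB_edges 6 H1_edges GB_to_H1" "covering_list 18 GB_edges 9 H2_edges GB_to_H2"
  "triangle_free_edges GB_edges"
  by code_simp+

lemma H1_connected_simple:
  "finite_simple_graph {0..<6} (edge_adj H1_edges)" "connected_graph {0..<6} (edge_adj H1_edges)"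
  using example_checks simple_edges_finite_simple_graph descending_edges_connected_graph by auto

lemma H2_connected_simple:
  "finite_simple_graph {0..<9} (edge_adj H2_edges)" "connected_graph {0..<9} (edge_adj H2_edges)"
  using example_checks simple_edges_finite_simple_graph descending_edges_connected_graph by auto

lemma GA_common_cover:
  "common_cover {0..<18} (edge_adj GA_edges) {0..<6} (edge_adj H1_edges) {0..<9} (edge_adj H2_edges)"
  unfolding common_cover_def covering_graph_def
  using example_checks simple_edges_finite_simple_graph descending_edges_connected_graph
    covering_list_covering_map by blast

lemma GB_common_cover:
  "common_cover {0..<18} (edge_adj GB_edges) {0..<6} (edge_adj H1_edges) {0..<9} (edge_adj H2_edges)"
  unfolding common_cover_def covering_graph_def
  using example_checks simple_edges_finite_simple_graph descending_edges_connected_graph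
    covering_list_covering_map by blast

lemma GA_not_iso_GB: "\<not> graph_iso {0..<18} (edge_adj GA_edges) {0..<18} (edge_adj GB_edges)"
proof
  assume "graph_iso {0..<18} (edge_adj GA_edges) {0..<18} (edge_adj GB_edges)"
  moreover have "has_triangle (edge_adj GA_edges)"
    unfolding has_triangle_def by (rule exI[of _ 0], rule exI[of _ 1], rule exI[of _ 2])
      (simp add: edge_adj_def GA_edges_def)
  ultimately have "has_triangle (edge_adj GB_edges)"
    using graph_iso_has_triangle example_checks(5) simple_edges_finite_simple_graph
    unfolding finite_simple_graph_def by blast
  then show False
    using triangle_free_edges_not_has_triangle example_checks(13) by blast
qed

lemma common_cover_H1_H2_card_ge:
  assumes "common_cover V E {0..<6} (edge_adj H1_edges) {0..<9} (edge_adj H2_edges)"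
  shows "18 \<le> card V"
proof -
  have "lcm 6 9 dvd card V"
    using common_cover_lcm_card_dvd[OF assms] H1_connected_simple H2_connected_simple
    unfolding finite_simple_graph_def by simp
  moreover have "0 < card V"
    using assms unfolding common_cover_def finite_simple_graph_def connected_graph_def
    by (simp add: card_gt_0_iff)
  ultimately show ?thesis by (simp add: dvd_imp_le lcm_nat_def gcd_non_0_nat)
qed

theorem mainTheorem6:
  shows "\<exists>(V1::nat set) E1 (V2::nat set) E2.
     finite_simple_graph V1 E1 \<and> connected_graph V1 E1 \<and>
     finite_simple_graph V2 E2 \<and> connected_graph V2 E2 \<and>
     (\<exists>(VA::nat set) EA (VB::nat set) EB.
        common_cover VA EA V1 E1 V2 E2 \<and>
        common_cover VB EB V1 E1 V2 E2 \<and>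
        \<not> graph_iso VA EA VB EB \<and>
        (\<forall>(V::nat set) E. common_cover V E V1 E1 V2 E2 \<longrightarrow>
            card VA \<le> card V \<and> card VB \<le> card V))"
  using H1_connected_simple H2_connected_simple GA_common_cover GB_common_cover GA_not_iso_GB
    common_cover_H1_H2_card_ge
  by (metis card_atLeastLessThan diff_zero)

end
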